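(* Let $\sigma$ be a uniform substitution, $\alpha$ a program, $U\subseteq\mathcal V\cup\Omega$, $I$ an interpretation and $w$ a state. Suppose $\sigma^{U,\emptyset}(\alpha)$ is defined with output taboo $V$, $v$ is a $U$-variation of $w$, and $(v,\tau,o)\in[\![\alpha]\!]^{\sigma^*_wI}$ with $o\neq\bot$. Then $o\cdot\tau$ is a $V$-variation of $w$.
   Context: Setting (dLCHP). Variables and channels. Variables are $\mathcal V=\mathcal V_{\mathbb R}\cup\mathcal V_{\mathbb N}\cup\mathcal V_{\mathcal T}$ (real, integer and trace variables). Each $x\in\mathcal V_{\mathbb R}$ has a differential symbol $x'\in\mathcal V_{\mathbb R}$. The variable $\mu\in\mathcal V_{\mathbb R}$ is the designated global time. $\Omega$ is the set of channel names. All channel sets and variable sets occurring in the syntax are finite or cofinite. $S^\complement$ denotes the complement of $S$. Syntax of terms. Terms have four sorts: - real terms $\theta::=x\mid f(\bar{ch},\bar e)\mid\theta_1+\theta_2\mid\theta_1\cdot\theta_2\mid(\eta)'\mid\mathrm{val}(te)\mid\mathrm{time}(te)$; - integer terms $\iota::=n\mid f(\bar{ch},\bar e)\mid\iota_1+\iota_2\mid|te|$; - channel terms $f(\bar{ch},\bar e)\mid\mathrm{chan}(te)$; - trace terms $te::=h\mid f(\bar{ch},\bar e)\mid\langle ch,\eta_1,\eta_2\rangle\mid te_1\cdot te_2\mid te\downarrow C\mid te[\iota]$. Here $\eta,\eta_i$ are polynomials with rational coefficients in real variables. $f(\bar{ch},\bar e)$ is a function symbol (including constants) annotated with a channel set $\bar{ch}\subseteq\Omega$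 and applied to terms $\bar e$. Operators such as $+,\cdot,\downarrow C$ are built-in. Syntax of programs. $\alpha,\beta::=a^{\bar z}_{\bar{ch}}\mid x:=\eta\mid x:=*\mid ?\chi\mid\{x'=\eta\,\&\,\chi\}\mid\alpha;\beta\mid\alpha\cup\beta\mid\alpha^*\mid ch(h)!\eta\mid ch(h)?x\mid\alpha\parallel\beta$. Here $\chi$ is a first-order real-arithmetic formula. $a^{\bar z}_{\bar{ch}}$ is a program constant allowed to write only channels in $\bar{ch}$ and to bind only variables in $\bar z\subseteq\mathcal V_{\mathbb R}\cup\mathcal V_{\mathcal T}$. Syntax of formulas. $\phi,\psi,A,C::=e_1\sim e_2\mid p(\bar{ch},\bar e)\mid\neg\phi\mid\phi\wedge\psi\mid\forall z\,\phi\mid[\alpha]\psi\mid[\alpha]\{A,C\}\psi$. Here $\sim$ ranges over $=$, $\ge$ and trace prefix $\preceq$, and $p$ is a predicate symbol. Well-formedness (context-sensitive syntax). In every $\alpha\parallel\beta$ we require $BV(\alpha)\cap BV(\beta)\subseteq\{\mu,\mu'\}\cup\mathcal V_{\mathcal T}$. In every $[\alpha]\{A,C\}\psi$ we require $(FV(A)\cup FV(C))\cap BV(\alpha)\subseteq\mathcal V_{\mathcal T}$. Traces and states. - A trace is a finite sequence of events $\langle ch,d,s\rangle$ with $ch\in\Omega$, $d\in\mathbb R$ (value) and $s\in\mathbb R$ (timestamp), with strictly increasing timestamps. - A recorded trace additionally tags each event with a trace variable $h$. - $\epsilon$ is the empty trace; $\preceq$ is prefix and $\prec$ is strict prefix.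 - A state $v$ maps each variable to a value of its type (real, natural number or trace). $v[z\mapsto d]$ is the modified state. - $v\cdot\tau$ (for a recorded trace $\tau$) appends to each $v(h)$ the subsequence of untagged events of $\tau$ tagged with $h$. - $\tau\downarrow C$ is the subsequence of events whose channel lies in $C$. - $v\downarrow C$ replaces $v(h)$ by $v(h)\downarrow C$ for every $h\in\mathcal V_{\mathcal T}$. - "$v=u$ on $S$" means that $v$ and $u$ agree on every variable in $S$. Computations. A computation is $(v,\tau,w)$ where $v$ is a state, $\tau$ a recorded trace, and $w$ a state or $\bot$ (unfinished). The prefix order on computation outcomes is: $(\tau',w')\preceq(\tau,w)$ iff either ($w'=\bot$ and $\tau'\preceq\tau$) or $(\tau',w')=(\tau,w)$. Interpretations. An interpretation $I$ assigns: - to function symbols, functions of matching sorts (smooth in real arguments if real-valued); - to predicate symbols, relations; - to each program constant $a^{\bar z}_{\bar{ch}}$, a prefix-closed set of chronological computations that contains all $(v,\epsilon,\bot)$, such that each $(v,\tau,w)$ in it satisfies $\tau\downarrow\bar{ch}^\complement=\epsilon$, $v=w$ on $\mathcal V_{\mathcal T}$, and $w\cdot\tau=v$ on $\bar z^\complement$. Term semantics. - Variables: $Iv[\![z]\!]=v(z)$. - Function symbols: $Iv[\![f(\bar{ch},e_1,\dots,e_k)]\!]=I(f)(I\tilde v[\![e_1]\!],\dots,I\tilde v[\![e_k]\!])$ where $\tilde v=v\downarrow\bar{ch}$. - Built-ins are evaluated pointwise. - Differentials: $Iv[\![(\eta)']\!]=\sum_x v(x')\,\partial Iv[\![\eta]\!]/\partial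 x$. Program semantics $[\![\alpha]\!]^I$. Let $\Lambda=\{(v,\epsilon,\bot)\}$ (all states $v$). - $[\![a^{\bar z}_{\bar{ch}}]\!]^I=I(a^{\bar z}_{\bar{ch}})$. - $x:=\eta$ gives $\Lambda\cup\{(v,\epsilon,v[x\mapsto Iv[\![\eta]\!]])\}$. - $x:=*$ gives $\Lambda\cup\{(v,\epsilon,v[x\mapsto d]):d\in\mathbb R\}$. - $?\chi$ gives $\Lambda\cup\{(v,\epsilon,v):I,v\models\chi\}$. - $\{x'=\eta\&\chi\}$ gives $\Lambda$ together with all $(v,\epsilon,\varphi(s))$ for solutions $\varphi:[0,s]\to$ states of $\mu'=1,x'=\eta$ that satisfy $\chi$ throughout, keep all variables other than $x,x',\mu,\mu'$ constant, and have $\varphi(0)=v$ except on $\{x',\mu'\}$. - $ch(h)!\eta$ gives all $(v,\tau,w)$ with $(\tau,w)\preceq(\langle h,ch,Iv[\![\eta]\!],v(\mu)\rangle,v)$. - $ch(h)?x$ gives all $(v,\tau,w)$ with $(\tau,w)\preceq(\langle h,ch,d,v(\mu)\rangle,v[x\mapsto d])$ for some $d\in\mathbb R$. - $\alpha\cup\beta$ is the union of the two semantics. - $\alpha;\beta$ is $\{(v,\tau,\bot):(v,\tau,w)\in[\![\alpha]\!]^I\}\cup\{(v,\tau_1\tau_2,w):(v,\tau_1,u)\in[\![\alpha]\!]^I,(u,\tau_2,w)\in[\![\beta]\!]^I\}$. - $\alpha^*$ is $\bigcup_n[\![\alpha^n]\!]^I$ with $\alpha^0=?\mathit{true}$. -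 $\alpha_1\parallel\alpha_2$ gives all $(v,\tau,w_1\oplus w_2)$ such that: $(v,\tau\downarrow\alpha_j,w_j)\in[\![\alpha_j]\!]^I$ for $j=1,2$, where $\tau\downarrow\alpha_j$ is the projection onto the communication of $\alpha_j$; the final global times of $w_1$ and $w_2$ agree; and $\tau$ contains only communication of $\alpha_1$ or $\alpha_2$. Here $w_1\oplus w_2$ is $\bot$ if either is $\bot$, and otherwise equals $w_1$ on $BV(\alpha_1)$ and $w_2$ elsewhere. Formula semantics. - $I,v\models e_1\sim e_2$ iff the values are related by $\sim$. - $I,v\models p(\bar{ch},\bar e)$ iff $(I\tilde v[\![\bar e]\!])\in I(p)$ with $\tilde v=v\downarrow\bar{ch}$. - $\neg$ and $\wedge$ are classical. - $\forall z\phi$ quantifies over all values of the type of $z$. - $I,v\models[\alpha]\psi$ iff $I,w\cdot\tau\models\psi$ for all $(v,\tau,w)\in[\![\alpha]\!]^I$ with $w\ne\bot$. - $I,v\models[\alpha]\{A,C\}\psi$ iff for all $(v,\tau,w)\in[\![\alpha]\!]^I$ both hold: - (commit) if $I,v\cdot\sigma\models A$ for all $\sigma\prec\tau$, then $I,v\cdot\tau\models C$; - (post) if $I,v\cdot\sigma\models A$ for all $\sigma\preceq\tau$ and $w\neq\bot$, then $I,w\cdot\tau\models\psi$. Static semantics. Formulas are treated as truth-valued expressions. - $FV(e)$ (for a term or formula $e$) is the set of $z\in\mathcal V$ such that some $I,v,\tilde v$ with $v=\tilde v$ on $\{z\}^\complement$ give different values of $e$. - $CN(e)$ is the set of $ch\in\Omega$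 such that some $I,v,\tilde v$ with $v\downarrow\{ch\}^\complement=\tilde v\downarrow\{ch\}^\complement$ give different values of $e$. - For a program $\alpha$, $FV(\alpha)$ is the set of $z$ for which there exist $I,v,\tilde v,\tau,w$ with $v=\tilde v$ on $\{z\}^\complement$ and $(v,\tau,w)\in[\![\alpha]\!]^I$, but no $(\tilde v,\tau,\tilde w)\in[\![\alpha]\!]^I$ with $\tilde w=w$ on $\{z\}^\complement$ (in particular $\tilde w=\bot$ iff $w=\bot$). - $BV(\alpha)$ is the set of $z$ such that some $I$ and $(v,\tau,w)\in[\![\alpha]\!]^I$ with $w\ne\bot$ satisfy $(w\cdot\tau)(z)\ne v(z)$. - $CN(\alpha)$ is the set of $ch$ such that some $I$ and $(v,\tau,w)\in[\![\alpha]\!]^I$ satisfy $\tau\downarrow\{ch\}\neq\epsilon$. - $V(\alpha)=FV(\alpha)\cup BV(\alpha)$. Uniform substitution. A uniform substitution $\sigma$ maps: - function symbols $f$ to terms $\sigma f(\cdot)$ of the same sort, in which the reserved nullary symbol $\cdot$ marks the argument position (symbols only usable inside programs are mapped to polynomials); - predicate symbols $p$ to formulas $\sigma p(\cdot)$ (those used in program tests are mapped to first-order real arithmetic); - program constants $a$ to programs $\sigma a$. All other symbols are left unchanged. The application is a partial operation; whenever a side condition fails, the result is undefined ("clash"), and undefinedness propagates. Terms and formulas, with taboo set $U\subseteq\mathcal V\cup\Omega$: - $\sigma^U(z)=z$ for variables $z$. - $\sigma^U(f(\bar{ch},e))$ is the result of replacing $\cdot$ in $\sigma f(\cdot)$ by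 $\sigma^U(e\downarrow\bar{ch})$. This is defined only if $(FV(\sigma f(\cdot))\cup CN(\sigma f(\cdot)))\cap U=\emptyset$. Here $e\downarrow\bar{ch}$ pushes the projection onto $\bar{ch}$ into $e$, e.g. $q(\bar{ch}_0,e')\downarrow\bar{ch}=q(\bar{ch}_0\cap\bar{ch},e')$. - $\sigma^U$ is homomorphic on built-in operators, on $\sim$, on $\neg$ and on $\wedge$. - $\sigma^U((\eta)')=(\sigma^{\mathcal V\cup\Omega}(\eta))'$. - $\sigma^U(p(\bar{ch},e))$ is analogous to the function symbol case. - $\sigma^U(\forall z\phi)=\forall z\,\sigma^{U\cup\{z\}}(\phi)$. - $\sigma^U([\alpha]\psi)=[\sigma^{U,\emptyset}(\alpha)]\sigma^V(\psi)$ and $\sigma^U([\alpha]\{A,C\}\psi)=[\sigma^{U,\emptyset}(\alpha)]\{\sigma^V(A),\sigma^V(C)\}\sigma^V(\psi)$, where $V$ is the output taboo of $\sigma^{U,\emptyset}(\alpha)$. Programs, with input taboo $U$ and parallel context $\Pi\subseteq\mathcal V$, yielding a result $\sigma^{U,\Pi}(\alpha)$ and an output taboo $V$: - $a^{\bar z}_{\bar{ch}}$: result $\sigma a$, output $U\cup BV(\sigma a)\cup CN(\sigma a)$; defined only if $BV(\sigma a)\subseteq\bar z$ and $CN(\sigma a)\subseteq\bar{ch}$. - $x:=\eta$: result $x:=\sigma^{U\cup\Pi}(\eta)$, output $U\cup\{x\}$. - $x:=*$: result unchanged, output $U\cup\{x\}$. - $?\chi$: result $?\sigma^{U\cup\Pi}(\chi)$,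 output $U$. - $\{x'=\eta\&\chi\}$: result $\{x'=\sigma^{U\cup\Pi}(\eta)\&\sigma^{U\cup\Pi}(\chi)\}$, output $U\cup\{x,x',\mu,\mu'\}$. - $ch(h)!\eta$: result $ch(h)!\sigma^{U\cup\Pi}(\eta)$, output $U\cup\{ch,h\}$. - $ch(h)?x$: result unchanged, output $U\cup\{ch,h,x\}$. - $\alpha\cup\beta$: result $\sigma^{U,\Pi}(\alpha)\cup\sigma^{U,\Pi}(\beta)$, output $V_1\cup V_2$ (the respective outputs). - $\alpha;\beta$: result $\sigma^{U,\Pi}(\alpha);\sigma^{V_1,\Pi}(\beta)$, where $V_1$ is the output of the first; the output is the output $V_2$ of the second. - $\alpha^*$: let $V$ be the output of $\sigma^{U,\Pi}(\alpha)$ (which must be defined); result $(\sigma^{V,\Pi}(\alpha))^*$, output $V$. - $\alpha\parallel\beta$: result $\sigma^{U,\Pi_\beta}(\alpha)\parallel\sigma^{U,\Pi_\alpha}(\beta)$ with outputs $V_1,V_2$; the output is $V_1\cup V_2$. Here $\Pi_\gamma=(\Pi\cup BV(\sigma^{U,\Pi}(\gamma)))\setminus(\{\mu,\mu'\}\cup\mathcal V_{\mathcal T})$. Adjoint interpretation. For an interpretation $I$ and a state $w$, the interpretation $\sigma^*_wI$ agrees with $I$ except: - $(\sigma^*_wI)(f)$ is the map $d\mapsto I[\cdot\mapsto d]\,w[\![\sigma f(\cdot)]\!]$; - $(\sigma^*_wI)(p)=\{d: I[\cdot\mapsto d],w\models\sigma p(\cdot)\}$; - $(\sigma^*_wI)(a^{\bar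 z}_{\bar{ch}})=[\![\sigma a]\!]^I$. Here $I[\cdot\mapsto d]$ interprets the nullary symbol $\cdot$ as $d$. Variation. For $U\subseteq\mathcal V\cup\Omega$, a state $v$ is a $U$-variation of a state $w$ iff $v\downarrow(U^\complement\cap\Omega)=w\downarrow(U^\complement\cap\Omega)$ on $U^\complement\cap\mathcal V$. *)

theory Defs
  imports "HOL-Analysis.Analysis" "HOL-Library.Sublist"
begin

type_synonym ident = string
type_synonym chan = string

text \<open>Real variables: a base name together with a number of primes;
  the differential symbol of (x,n) is (x, n+1).\<close>
type_synonym rvar = "ident \<times> nat"

definition dif :: "rvar \<Rightarrow> rvar" where "dif x = (fst x, Suc (snd x))"

definition mu :: rvar where "mu = (''mu'', 0)"

datatype var = RV rvar | NV ident | TV ident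

type_synonym event = "chan \<times> real \<times> real"
type_synonym trace = "event list"
type_synonym revent = "ident \<times> chan \<times> real \<times> real"
type_synonym rtrace = "revent list"

datatype val = VR real | VN nat | VC chan | VT trace

record state =
  sR :: "rvar \<Rightarrow> real"
  sN :: "ident \<Rightarrow> nat"
  sT :: "ident \<Rightarrow> trace"

fun sget :: "state \<Rightarrow> var \<Rightarrow> val" where
  "sget v (RV x) = VR (sR v x)"
| "sget v (NV n) = VN (sN v n)"
| "sget v (TV h) = VT (sT v h)"

fun vsort_ok :: "var \<Rightarrow> val \<Rightarrow> bool" where
  "vsort_ok (RV _) (VR _) = True"
| "vsort_ok (NV _) (VN _) = True"
| "vsort_ok (TV _) (VT _) = True"
| "vsort_ok _ _ = False"

fun supd :: "state \<Rightarrow> var \<Rightarrow> val \<Rightarrow> state" where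
  "supd v (RV x) (VR r) = v\<lparr>sR := (sR v)(x := r)\<rparr>"
| "supd v (NV n) (VN k) = v\<lparr>sN := (sN v)(n := k)\<rparr>"
| "supd v (TV h) (VT t) = v\<lparr>sT := (sT v)(h := t)\<rparr>"
| "supd v _ _ = v"

fun rof :: "val \<Rightarrow> real" where
  "rof (VR r) = r" | "rof _ = 0"

definition rupd :: "state \<Rightarrow> rvar \<Rightarrow> real \<Rightarrow> state" where
  "rupd v x r = v\<lparr>sR := (sR v)(x := r)\<rparr>"

definition eqon :: "state \<Rightarrow> state \<Rightarrow> var set \<Rightarrow> bool" where
  "eqon v u S \<longleftrightarrow> (\<forall>z\<in>S. sget v z = sget u z)"

definition tproj :: "chan set \<Rightarrow> trace \<Rightarrow> trace" where
  "tproj C t = filter (\<lambda>(c,_,_). c \<in> C) t"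

definition rproj :: "chan set \<Rightarrow> rtrace \<Rightarrow> rtrace" where
  "rproj C t = filter (\<lambda>(_,c,_,_). c \<in> C) t"

definition sproj :: "chan set \<Rightarrow> state \<Rightarrow> state" where
  "sproj C v = v\<lparr>sT := (\<lambda>h. tproj C (sT v h))\<rparr>"

definition sapp :: "state \<Rightarrow> rtrace \<Rightarrow> state" where
  "sapp v \<tau> = v\<lparr>sT := (\<lambda>h. sT v h @ map (\<lambda>(_,c,d,s). (c,d,s)) (filter (\<lambda>(h',_,_,_). h' = h) \<tau>))\<rparr>"

section \<open>Syntax\<close>

datatype trm =
    Var var
  | RConst rat
  | NConst nat
  | Fn ident "chan set" "trm list"
  | Plus trm trm
  | Times trm trm
  | Diff trm
  | ValT trm
  | TimeT trm
  | LenT trm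
  | ChanT trm
  | Ev chan trm trm
  | Cat trm trm
  | ProjT trm "chan set"
  | At trm trm
  | Dot nat

datatype fml =
    Eq trm trm
  | Geq trm trm
  | Pref trm trm
  | Pred ident "chan set" "trm list"
  | Not fml
  | And fml fml
  | All var fml
  | Box prog fml
  | AC prog fml fml fml
and prog =
    PConst ident "var set" "chan set"
  | Assign rvar trm
  | Rand rvar
  | Test fml
  | ODE rvar trm fml
  | Seq prog prog
  | Choice prog prog
  | Loop prog
  | Send chan ident trm
  | Recv chan ident rvar
  | Par prog prog

type_synonym comp = "state \<times> rtrace \<times> state option"

definition cpref :: "rtrace \<times> state option \<Rightarrow> rtrace \<times> state option \<Rightarrow> bool" where
  "cpref a b \<longleftrightarrow> (snd a = None \<and> prefix (fst a) (fst b)) \<or> a = b"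

definition times_of :: "rtrace \<Rightarrow> real list" where
  "times_of \<tau> = map (\<lambda>(_,_,_,s). s) \<tau>"

definition chronological :: "comp \<Rightarrow> bool" where
  "chronological c = (case c of (v, \<tau>, w) \<Rightarrow>
      sorted (times_of \<tau>) \<and> (\<forall>s\<in>set (times_of \<tau>). sR v mu \<le> s) \<and>
      (\<forall>w'. w = Some w' \<longrightarrow> (\<forall>s\<in>set (times_of \<tau>). s \<le> sR w' mu)))"

record interp =
  IF :: "ident \<Rightarrow> val list \<Rightarrow> val"
  IP :: "ident \<Rightarrow> val list \<Rightarrow> bool"
  IA :: "ident \<times> var set \<times> chan set \<Rightarrow> comp set"
  IDot :: "val list"

definition is_interp :: "interp \<Rightarrow> bool" where
  "is_interp I \<longleftrightarrow> (\<forall>a Z C. let S = IA I (a, Z, C) in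
      (\<forall>v. (v, [], None) \<in> S) \<and>
      (\<forall>v \<tau> w \<tau>' w'. (v, \<tau>, w) \<in> S \<and> cpref (\<tau>', w') (\<tau>, w) \<longrightarrow> (v, \<tau>', w') \<in> S) \<and>
      (\<forall>v \<tau> w. (v, \<tau>, w) \<in> S \<longrightarrow>
          chronological (v, \<tau>, w) \<and> rproj (- C) \<tau> = [] \<and>
          (\<forall>w'. w = Some w' \<longrightarrow> eqon v w' (range TV) \<and> eqon (sapp w' \<tau>) v (- Z))))"

section \<open>Semantics\<close>

primrec rvars :: "trm \<Rightarrow> rvar set" where
  "rvars (Var z) = (case z of RV x \<Rightarrow> {x} | _ \<Rightarrow> {})"
| "rvars (RConst q) = {}"
| "rvars (NConst n) = {}"
| "rvars (Fn f C args) = \<Union> (set (map rvars args))"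
| "rvars (Plus a b) = rvars a \<union> rvars b"
| "rvars (Times a b) = rvars a \<union> rvars b"
| "rvars (Diff a) = rvars a \<union> dif ` rvars a"
| "rvars (ValT a) = rvars a"
| "rvars (TimeT a) = rvars a"
| "rvars (LenT a) = rvars a"
| "rvars (ChanT a) = rvars a"
| "rvars (Ev c a b) = rvars a \<union> rvars b"
| "rvars (Cat a b) = rvars a \<union> rvars b"
| "rvars (ProjT a C) = rvars a"
| "rvars (At a b) = rvars a \<union> rvars b"
| "rvars (Dot i) = {}"

primrec trm_sem :: "interp \<Rightarrow> state \<Rightarrow> trm \<Rightarrow> val" where
  "trm_sem I v (Var z) = sget v z"
| "trm_sem I v (RConst q) = VR (of_rat q)"
| "trm_sem I v (NConst n) = VN n"
| "trm_sem I v (Fn f C args) = IF I f (map (trm_sem I (sproj C v)) args)"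
| "trm_sem I v (Plus a b) = (case (trm_sem I v a, trm_sem I v b) of
      (VR x, VR y) \<Rightarrow> VR (x + y) | (VN x, VN y) \<Rightarrow> VN (x + y) | _ \<Rightarrow> VR 0)"
| "trm_sem I v (Times a b) = (case (trm_sem I v a, trm_sem I v b) of
      (VR x, VR y) \<Rightarrow> VR (x * y) | _ \<Rightarrow> VR 0)"
| "trm_sem I v (Diff a) = VR (\<Sum>x\<in>rvars a.
      sR v (dif x) * deriv (\<lambda>r. rof (trm_sem I (rupd v x r) a)) (sR v x))"
| "trm_sem I v (ValT a) = (case trm_sem I v a of VT [(c,d,s)] \<Rightarrow> VR d | _ \<Rightarrow> VR 0)"
| "trm_sem I v (TimeT a) = (case trm_sem I v a of VT [(c,d,s)] \<Rightarrow> VR s | _ \<Rightarrow> VR 0)"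
| "trm_sem I v (LenT a) = (case trm_sem I v a of VT t \<Rightarrow> VN (length t) | _ \<Rightarrow> VN 0)"
| "trm_sem I v (ChanT a) = (case trm_sem I v a of VT [(c,d,s)] \<Rightarrow> VC c | _ \<Rightarrow> VC '''')"
| "trm_sem I v (Ev c a b) = VT [(c, rof (trm_sem I v a), rof (trm_sem I v b))]"
| "trm_sem I v (Cat a b) = (case (trm_sem I v a, trm_sem I v b) of
      (VT s, VT t) \<Rightarrow> VT (s @ t) | _ \<Rightarrow> VT [])"
| "trm_sem I v (ProjT a C) = (case trm_sem I v a of VT t \<Rightarrow> VT (tproj C t) | _ \<Rightarrow> VT [])"
| "trm_sem I v (At a b) = (case (trm_sem I v a, trm_sem I v b) of
      (VT t, VN i) \<Rightarrow> VT (if i < length t then [t ! i] else []) | _ \<Rightarrow> VT [])"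
| "trm_sem I v (Dot i) = (if i < length (IDot I) then IDot I ! i else VR 0)"

definition seqc :: "comp set \<Rightarrow> comp set \<Rightarrow> comp set" where
  "seqc A B = {(v, \<tau>, None) | v \<tau> w. (v, \<tau>, w) \<in> A} \<union>
     {(v, \<tau>1 @ \<tau>2, w) | v \<tau>1 u \<tau>2 w. (v, \<tau>1, Some u) \<in> A \<and> (u, \<tau>2, w) \<in> B}"

definition Lam :: "comp set" where "Lam = {(v, [], None) | v. True}"

primrec powc :: "comp set \<Rightarrow> nat \<Rightarrow> comp set" where
  "powc A 0 = Lam \<union> {(v, [], Some v) | v. True}"
| "powc A (Suc n) = seqc A (powc A n)"

definition bvs :: "(interp \<Rightarrow> comp set) \<Rightarrow> var set" where
  "bvs S = {z. \<exists>J v \<tau> w. is_interp J \<and> (v, \<tau>, Some w) \<in> S J \<and> sget (sapp w \<tau>) z \<noteq> sget v z}"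

definition cns :: "(interp \<Rightarrow> comp set) \<Rightarrow> chan set" where
  "cns S = {c. \<exists>J v \<tau> w. is_interp J \<and> (v, \<tau>, w) \<in> S J \<and> rproj {c} \<tau> \<noteq> []}"

definition commproj :: "var set \<Rightarrow> chan set \<Rightarrow> rtrace \<Rightarrow> rtrace" where
  "commproj B C \<tau> = filter (\<lambda>(h,c,_,_). TV h \<in> B \<and> c \<in> C) \<tau>"

definition merge :: "var set \<Rightarrow> state option \<Rightarrow> state option \<Rightarrow> state option" where
  "merge B w1 w2 = (case (w1, w2) of (Some u1, Some u2) \<Rightarrow>
       Some \<lparr>sR = (\<lambda>x. if RV x \<in> B then sR u1 x else sR u2 x),
             sN = (\<lambda>n. if NV n \<in> B then sN u1 n else sN u2 n),
             sT = (\<lambda>h. if TV h \<in> B then sT u1 h else sT u2 h)\<rparr>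
     | _ \<Rightarrow> None)"

fun vcomp :: "(real \<Rightarrow> real \<Rightarrow> bool) \<Rightarrow> (nat \<Rightarrow> nat \<Rightarrow> bool) \<Rightarrow> val \<Rightarrow> val \<Rightarrow> bool" where
  "vcomp R N (VR x) (VR y) = R x y"
| "vcomp R N (VN x) (VN y) = N x y"
| "vcomp R N _ _ = False"

fun vpref :: "val \<Rightarrow> val \<Rightarrow> bool" where
  "vpref (VT s) (VT t) = prefix s t"
| "vpref _ _ = False"

primrec fml_sem :: "interp \<Rightarrow> state \<Rightarrow> fml \<Rightarrow> bool"
  and prog_sem :: "interp \<Rightarrow> prog \<Rightarrow> comp set" where
  "fml_sem I v (Eq a b) = (trm_sem I v a = trm_sem I v b)"
| "fml_sem I v (Geq a b) = vcomp (\<ge>) (\<ge>) (trm_sem I v a) (trm_sem I v b)"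
| "fml_sem I v (Pref a b) = vpref (trm_sem I v a) (trm_sem I v b)"
| "fml_sem I v (Pred p C args) = IP I p (map (trm_sem I (sproj C v)) args)"
| "fml_sem I v (Not \<phi>) = (\<not> fml_sem I v \<phi>)"
| "fml_sem I v (And \<phi> \<psi>) = (fml_sem I v \<phi> \<and> fml_sem I v \<psi>)"
| "fml_sem I v (All z \<phi>) = (\<forall>d. vsort_ok z d \<longrightarrow> fml_sem I (supd v z d) \<phi>)"
| "fml_sem I v (Box \<alpha> \<psi>) = (\<forall>\<tau> w. (v, \<tau>, Some w) \<in> prog_sem I \<alpha> \<longrightarrow> fml_sem I (sapp w \<tau>) \<psi>)"
| "fml_sem I v (AC \<alpha> A C \<psi>) = (\<forall>\<tau> w. (v, \<tau>, w) \<in> prog_sem I \<alpha> \<longrightarrow>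
      ((\<forall>\<sigma>. strict_prefix \<sigma> \<tau> \<longrightarrow> fml_sem I (sapp v \<sigma>) A) \<longrightarrow> fml_sem I (sapp v \<tau>) C) \<and>
      ((\<forall>\<sigma>. prefix \<sigma> \<tau> \<longrightarrow> fml_sem I (sapp v \<sigma>) A) \<and> w \<noteq> None \<longrightarrow> fml_sem I (sapp (the w) \<tau>) \<psi>))"
| "prog_sem I (PConst a Z C) = IA I (a, Z, C)"
| "prog_sem I (Assign x e) = Lam \<union> {(v, [], Some (rupd v x (rof (trm_sem I v e)))) | v. True}"
| "prog_sem I (Rand x) = Lam \<union> {(v, [], Some (rupd v x d)) | v d. True}"
| "prog_sem I (Test Q) = Lam \<union> {(v, [], Some v) | v. fml_sem I v Q}"
| "prog_sem I (ODE x e Q) = Lam \<union> {(v, [], Some (\<phi> s)) | v s \<phi>. 0 \<le> s \<and>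
      (\<forall>t\<in>{0..s}. fml_sem I (\<phi> t) Q) \<and>
      (\<forall>t\<in>{0..s}. \<forall>z. z \<notin> {RV x, RV (dif x), RV mu, RV (dif mu)} \<longrightarrow> sget (\<phi> t) z = sget v z) \<and>
      eqon (\<phi> 0) v (- {RV (dif x), RV (dif mu)}) \<and>
      (\<forall>t\<in>{0..s}. sR (\<phi> t) (dif x) = rof (trm_sem I (\<phi> t) e) \<and> sR (\<phi> t) (dif mu) = 1 \<and>
         ((\<lambda>r. sR (\<phi> r) x) has_vector_derivative sR (\<phi> t) (dif x)) (at t within {0..s}) \<and>
         ((\<lambda>r. sR (\<phi> r) mu) has_vector_derivative sR (\<phi> t) (dif mu)) (at t within {0..s}))}"
| "prog_sem I (Seq \<alpha> \<beta>) = seqc (prog_sem I \<alpha>) (prog_sem I \<beta>)"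
| "prog_sem I (Choice \<alpha> \<beta>) = prog_sem I \<alpha> \<union> prog_sem I \<beta>"
| "prog_sem I (Loop \<alpha>) = (\<Union>n. powc (prog_sem I \<alpha>) n)"
| "prog_sem I (Send c h e) = {(v, \<tau>, w) | v \<tau> w.
      cpref (\<tau>, w) ([(h, c, rof (trm_sem I v e), sR v mu)], Some v)}"
| "prog_sem I (Recv c h x) = {(v, \<tau>, w) | v \<tau> w. \<exists>d.
      cpref (\<tau>, w) ([(h, c, d, sR v mu)], Some (rupd v x d))}"
| "prog_sem I (Par \<alpha> \<beta>) =
     (let B1 = bvs (\<lambda>J. prog_sem J \<alpha>); C1 = cns (\<lambda>J. prog_sem J \<alpha>);
          B2 = bvs (\<lambda>J. prog_sem J \<beta>); C2 = cns (\<lambda>J. prog_sem J \<beta>) in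
      {(v, \<tau>, merge B1 w1 w2) | v \<tau> w1 w2.
         (v, commproj B1 C1 \<tau>, w1) \<in> prog_sem I \<alpha> \<and>
         (v, commproj B2 C2 \<tau>, w2) \<in> prog_sem I \<beta> \<and>
         (\<forall>u1 u2. w1 = Some u1 \<and> w2 = Some u2 \<longrightarrow> sR u1 mu = sR u2 mu) \<and>
         (\<forall>e\<in>set \<tau>. e \<in> set (commproj B1 C1 [e]) \<or> e \<in> set (commproj B2 C2 [e]))})"

section \<open>Static semantics (semantic free / bound variables and channels)\<close>

definition FV_trm :: "trm \<Rightarrow> var set" where
  "FV_trm e = {z. \<exists>I v u. is_interp I \<and> eqon v u (- {z}) \<and> trm_sem I v e \<noteq> trm_sem I u e}"

definition CN_trm :: "trm \<Rightarrow> chan set" where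
  "CN_trm e = {c. \<exists>I v u. is_interp I \<and> sproj (- {c}) v = sproj (- {c}) u \<and>
                  trm_sem I v e \<noteq> trm_sem I u e}"

definition FV_fml :: "fml \<Rightarrow> var set" where
  "FV_fml e = {z. \<exists>I v u. is_interp I \<and> eqon v u (- {z}) \<and> fml_sem I v e \<noteq> fml_sem I u e}"

definition CN_fml :: "fml \<Rightarrow> chan set" where
  "CN_fml e = {c. \<exists>I v u. is_interp I \<and> sproj (- {c}) v = sproj (- {c}) u \<and>
                  fml_sem I v e \<noteq> fml_sem I u e}"

definition FV_prog :: "prog \<Rightarrow> var set" where
  "FV_prog \<alpha> = {z. \<exists>I v u \<tau> w. is_interp I \<and> eqon v u (- {z}) \<and> (v, \<tau>, w) \<in> prog_sem I \<alpha> \<and>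
      \<not> (\<exists>w'. (u, \<tau>, w') \<in> prog_sem I \<alpha> \<and> (w' = None \<longleftrightarrow> w = None) \<and>
             (\<forall>s s'. w = Some s \<and> w' = Some s' \<longrightarrow> eqon s' s (- {z})))}"

definition BV_prog :: "prog \<Rightarrow> var set" where
  "BV_prog \<alpha> = bvs (\<lambda>J. prog_sem J \<alpha>)"

definition CN_prog :: "prog \<Rightarrow> chan set" where
  "CN_prog \<alpha> = cns (\<lambda>J. prog_sem J \<alpha>)"

definition fincof :: "'a set \<Rightarrow> bool" where
  "fincof S \<longleftrightarrow> finite S \<or> finite (- S)"

primrec poly_trm :: "trm \<Rightarrow> bool" where
  "poly_trm (Var z) = (case z of RV x \<Rightarrow> True | _ \<Rightarrow> False)"
| "poly_trm (RConst q) = True"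
| "poly_trm (NConst n) = False"
| "poly_trm (Fn f C args) = (fincof C \<and> list_all id (map poly_trm args))"
| "poly_trm (Plus a b) = (poly_trm a \<and> poly_trm b)"
| "poly_trm (Times a b) = (poly_trm a \<and> poly_trm b)"
| "poly_trm (Diff a) = False"
| "poly_trm (ValT a) = False"
| "poly_trm (TimeT a) = False"
| "poly_trm (LenT a) = False"
| "poly_trm (ChanT a) = False"
| "poly_trm (Ev c a b) = False"
| "poly_trm (Cat a b) = False"
| "poly_trm (ProjT a C) = False"
| "poly_trm (At a b) = False"
| "poly_trm (Dot i) = False"

primrec wf_trm :: "trm \<Rightarrow> bool" where
  "wf_trm (Var z) = True"
| "wf_trm (RConst q) = True"
| "wf_trm (NConst n) = True"
| "wf_trm (Fn f C args) = (fincof C \<and> list_all id (map wf_trm args))"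
| "wf_trm (Plus a b) = (wf_trm a \<and> wf_trm b)"
| "wf_trm (Times a b) = (wf_trm a \<and> wf_trm b)"
| "wf_trm (Diff a) = poly_trm a"
| "wf_trm (ValT a) = wf_trm a"
| "wf_trm (TimeT a) = wf_trm a"
| "wf_trm (LenT a) = wf_trm a"
| "wf_trm (ChanT a) = wf_trm a"
| "wf_trm (Ev c a b) = (poly_trm a \<and> poly_trm b)"
| "wf_trm (Cat a b) = (wf_trm a \<and> wf_trm b)"
| "wf_trm (ProjT a C) = (fincof C \<and> wf_trm a)"
| "wf_trm (At a b) = (wf_trm a \<and> wf_trm b)"
| "wf_trm (Dot i) = True"

fun fol_fml :: "fml \<Rightarrow> bool" where
  "fol_fml (Eq a b) = (poly_trm a \<and> poly_trm b)"
| "fol_fml (Geq a b) = (poly_trm a \<and> poly_trm b)"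
| "fol_fml (Pred p C args) = (fincof C \<and> list_all poly_trm args)"
| "fol_fml (Not \<phi>) = fol_fml \<phi>"
| "fol_fml (And \<phi> \<psi>) = (fol_fml \<phi> \<and> fol_fml \<psi>)"
| "fol_fml (All z \<phi>) = ((case z of RV x \<Rightarrow> True | _ \<Rightarrow> False) \<and> fol_fml \<phi>)"
| "fol_fml _ = False"

primrec wf_fml :: "fml \<Rightarrow> bool" and wf_prog :: "prog \<Rightarrow> bool" where
  "wf_fml (Eq a b) = (wf_trm a \<and> wf_trm b)"
| "wf_fml (Geq a b) = (wf_trm a \<and> wf_trm b)"
| "wf_fml (Pref a b) = (wf_trm a \<and> wf_trm b)"
| "wf_fml (Pred p C args) = (fincof C \<and> list_all wf_trm args)"
| "wf_fml (Not \<phi>) = wf_fml \<phi>"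
| "wf_fml (And \<phi> \<psi>) = (wf_fml \<phi> \<and> wf_fml \<psi>)"
| "wf_fml (All z \<phi>) = wf_fml \<phi>"
| "wf_fml (Box \<alpha> \<psi>) = (wf_prog \<alpha> \<and> wf_fml \<psi>)"
| "wf_fml (AC \<alpha> A C \<psi>) = (wf_prog \<alpha> \<and> wf_fml A \<and> wf_fml C \<and> wf_fml \<psi> \<and>
      (FV_fml A \<union> FV_fml C) \<inter> BV_prog \<alpha> \<subseteq> range TV)"
| "wf_prog (PConst a Z C) = (fincof Z \<and> fincof C)"
| "wf_prog (Assign x e) = poly_trm e"
| "wf_prog (Rand x) = True"
| "wf_prog (Test Q) = fol_fml Q"
| "wf_prog (ODE x e Q) = (poly_trm e \<and> fol_fml Q)"
| "wf_prog (Seq \<alpha> \<beta>) = (wf_prog \<alpha> \<and> wf_prog \<beta>)"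
| "wf_prog (Choice \<alpha> \<beta>) = (wf_prog \<alpha> \<and> wf_prog \<beta>)"
| "wf_prog (Loop \<alpha>) = wf_prog \<alpha>"
| "wf_prog (Send c h e) = poly_trm e"
| "wf_prog (Recv c h x) = True"
| "wf_prog (Par \<alpha> \<beta>) = (wf_prog \<alpha> \<and> wf_prog \<beta> \<and>
      BV_prog \<alpha> \<inter> BV_prog \<beta> \<subseteq> {RV mu, RV (dif mu)} \<union> range TV)"

section \<open>Uniform substitution\<close>

text \<open>Taboo sets are subsets of variables and channels.\<close>
datatype sym = SV var | SC chan

definition syms :: "var set \<Rightarrow> chan set \<Rightarrow> sym set" where
  "syms V C = SV ` V \<union> SC ` C"

record usubst =
  SF :: "ident \<Rightarrow> trm option"
  SP :: "ident \<Rightarrow> fml option"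
  SA :: "ident \<times> var set \<times> chan set \<Rightarrow> prog option"

definition wf_usubst :: "usubst \<Rightarrow> bool" where
  "wf_usubst \<sigma> \<longleftrightarrow> (\<forall>f t. SF \<sigma> f = Some t \<longrightarrow> wf_trm t) \<and>
                   (\<forall>p \<phi>. SP \<sigma> p = Some \<phi> \<longrightarrow> wf_fml \<phi>) \<and>
                   (\<forall>a \<beta>. SA \<sigma> a = Some \<beta> \<longrightarrow> wf_prog \<beta>)"

text \<open>Replacing the argument placeholders (Dot i) by the given argument terms.\<close>
primrec repl_trm :: "trm list \<Rightarrow> trm \<Rightarrow> trm" where
  "repl_trm as (Var z) = Var z"
| "repl_trm as (RConst q) = RConst q"
| "repl_trm as (NConst n) = NConst n"
| "repl_trm as (Fn f C args) = Fn f C (map (repl_trm as) args)"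
| "repl_trm as (Plus a b) = Plus (repl_trm as a) (repl_trm as b)"
| "repl_trm as (Times a b) = Times (repl_trm as a) (repl_trm as b)"
| "repl_trm as (Diff a) = Diff (repl_trm as a)"
| "repl_trm as (ValT a) = ValT (repl_trm as a)"
| "repl_trm as (TimeT a) = TimeT (repl_trm as a)"
| "repl_trm as (LenT a) = LenT (repl_trm as a)"
| "repl_trm as (ChanT a) = ChanT (repl_trm as a)"
| "repl_trm as (Ev c a b) = Ev c (repl_trm as a) (repl_trm as b)"
| "repl_trm as (Cat a b) = Cat (repl_trm as a) (repl_trm as b)"
| "repl_trm as (ProjT a C) = ProjT (repl_trm as a) C"
| "repl_trm as (At a b) = At (repl_trm as a) (repl_trm as b)"
| "repl_trm as (Dot i) = (if i < length as then as ! i else Dot i)"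

primrec repl_fml :: "trm list \<Rightarrow> fml \<Rightarrow> fml" and repl_prog :: "trm list \<Rightarrow> prog \<Rightarrow> prog" where
  "repl_fml as (Eq a b) = Eq (repl_trm as a) (repl_trm as b)"
| "repl_fml as (Geq a b) = Geq (repl_trm as a) (repl_trm as b)"
| "repl_fml as (Pref a b) = Pref (repl_trm as a) (repl_trm as b)"
| "repl_fml as (Pred p C args) = Pred p C (map (repl_trm as) args)"
| "repl_fml as (Not \<phi>) = Not (repl_fml as \<phi>)"
| "repl_fml as (And \<phi> \<psi>) = And (repl_fml as \<phi>) (repl_fml as \<psi>)"
| "repl_fml as (All z \<phi>) = All z (repl_fml as \<phi>)"
| "repl_fml as (Box \<alpha> \<psi>) = Box (repl_prog as \<alpha>) (repl_fml as \<psi>)"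
| "repl_fml as (AC \<alpha> A C \<psi>) = AC (repl_prog as \<alpha>) (repl_fml as A) (repl_fml as C) (repl_fml as \<psi>)"
| "repl_prog as (PConst a Z C) = PConst a Z C"
| "repl_prog as (Assign x e) = Assign x (repl_trm as e)"
| "repl_prog as (Rand x) = Rand x"
| "repl_prog as (Test Q) = Test (repl_fml as Q)"
| "repl_prog as (ODE x e Q) = ODE x (repl_trm as e) (repl_fml as Q)"
| "repl_prog as (Seq \<alpha> \<beta>) = Seq (repl_prog as \<alpha>) (repl_prog as \<beta>)"
| "repl_prog as (Choice \<alpha> \<beta>) = Choice (repl_prog as \<alpha>) (repl_prog as \<beta>)"
| "repl_prog as (Loop \<alpha>) = Loop (repl_prog as \<alpha>)"
| "repl_prog as (Send c h e) = Send c h (repl_trm as e)"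
| "repl_prog as (Recv c h x) = Recv c h x"
| "repl_prog as (Par \<alpha> \<beta>) = Par (repl_prog as \<alpha>) (repl_prog as \<beta>)"

definition pj :: "chan set option \<Rightarrow> chan set \<Rightarrow> chan set" where
  "pj P C = (case P of None \<Rightarrow> C | Some D \<Rightarrow> C \<inter> D)"

definition opt2 :: "('a \<Rightarrow> 'b \<Rightarrow> 'c) \<Rightarrow> 'a option \<Rightarrow> 'b option \<Rightarrow> 'c option" where
  "opt2 f x y = (case (x, y) of (Some a, Some b) \<Rightarrow> Some (f a b) | _ \<Rightarrow> None)"

text \<open>usubst_trm \<sigma> U P e computes \<sigma>^U(e \<down> P), where P = None means no pending
  projection and P = Some C means the projection e \<down> C is pushed into e.\<close>
primrec usubst_trm :: "usubst \<Rightarrow> sym set \<Rightarrow> chan set option \<Rightarrow> trm \<Rightarrow> trm option" where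
  "usubst_trm \<sigma> U P (Var z) = (case (P, z) of (Some C, TV h) \<Rightarrow> Some (ProjT (Var (TV h)) C)
                                 | _ \<Rightarrow> Some (Var z))"
| "usubst_trm \<sigma> U P (RConst q) = Some (RConst q)"
| "usubst_trm \<sigma> U P (NConst n) = Some (NConst n)"
| "usubst_trm \<sigma> U P (Fn f C0 args) = (let C = pj P C0 in
     (case SF \<sigma> f of
        Some t \<Rightarrow> (if syms (FV_trm t) (CN_trm t) \<inter> U = {}
                   then map_option (\<lambda>as. repl_trm as t) (those (map (usubst_trm \<sigma> U (Some C)) args))
                   else None)
      | None \<Rightarrow> map_option (Fn f C) (those (map (usubst_trm \<sigma> U None) args))))"
| "usubst_trm \<sigma> U P (Plus a b) = opt2 Plus (usubst_trm \<sigma> U P a) (usubst_trm \<sigma> U P b)"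
| "usubst_trm \<sigma> U P (Times a b) = opt2 Times (usubst_trm \<sigma> U P a) (usubst_trm \<sigma> U P b)"
| "usubst_trm \<sigma> U P (Diff a) = map_option Diff (usubst_trm \<sigma> UNIV P a)"
| "usubst_trm \<sigma> U P (ValT a) = map_option ValT (usubst_trm \<sigma> U P a)"
| "usubst_trm \<sigma> U P (TimeT a) = map_option TimeT (usubst_trm \<sigma> U P a)"
| "usubst_trm \<sigma> U P (LenT a) = map_option LenT (usubst_trm \<sigma> U P a)"
| "usubst_trm \<sigma> U P (ChanT a) = map_option ChanT (usubst_trm \<sigma> U P a)"
| "usubst_trm \<sigma> U P (Ev c a b) = opt2 (Ev c) (usubst_trm \<sigma> U P a) (usubst_trm \<sigma> U P b)"
| "usubst_trm \<sigma> U P (Cat a b) = opt2 Cat (usubst_trm \<sigma> U P a) (usubst_trm \<sigma> U P b)"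
| "usubst_trm \<sigma> U P (ProjT a C) = map_option (\<lambda>a'. ProjT a' C) (usubst_trm \<sigma> U P a)"
| "usubst_trm \<sigma> U P (At a b) = opt2 At (usubst_trm \<sigma> U P a) (usubst_trm \<sigma> U P b)"
| "usubst_trm \<sigma> U P (Dot i) = Some (Dot i)"

definition subst_const :: "usubst \<Rightarrow> ident \<Rightarrow> var set \<Rightarrow> chan set \<Rightarrow> prog" where
  "subst_const \<sigma> a Z C = (case SA \<sigma> (a, Z, C) of Some \<beta> \<Rightarrow> \<beta> | None \<Rightarrow> PConst a Z C)"

definition par_ctx :: "var set \<Rightarrow> prog \<Rightarrow> var set" where
  "par_ctx Pc \<gamma> = (Pc \<union> BV_prog \<gamma>) - ({RV mu, RV (dif mu)} \<union> range TV)"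

text \<open>usubst_fml \<sigma> U \<phi> = \<sigma>^U(\<phi>);  usubst_prog \<sigma> U Pc \<alpha> = (\<sigma>^{U,Pc}(\<alpha>), output taboo).\<close>
primrec usubst_fml :: "usubst \<Rightarrow> sym set \<Rightarrow> fml \<Rightarrow> fml option"
  and usubst_prog :: "usubst \<Rightarrow> sym set \<Rightarrow> var set \<Rightarrow> prog \<Rightarrow> (prog \<times> sym set) option" where
  "usubst_fml \<sigma> U (Eq a b) = opt2 Eq (usubst_trm \<sigma> U None a) (usubst_trm \<sigma> U None b)"
| "usubst_fml \<sigma> U (Geq a b) = opt2 Geq (usubst_trm \<sigma> U None a) (usubst_trm \<sigma> U None b)"
| "usubst_fml \<sigma> U (Pref a b) = opt2 Pref (usubst_trm \<sigma> U None a) (usubst_trm \<sigma> U None b)"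
| "usubst_fml \<sigma> U (Pred p C args) =
     (case SP \<sigma> p of
        Some \<psi> \<Rightarrow> (if syms (FV_fml \<psi>) (CN_fml \<psi>) \<inter> U = {}
                   then map_option (\<lambda>as. repl_fml as \<psi>) (those (map (usubst_trm \<sigma> U (Some C)) args))
                   else None)
      | None \<Rightarrow> map_option (Pred p C) (those (map (usubst_trm \<sigma> U None) args)))"
| "usubst_fml \<sigma> U (Not \<phi>) = map_option Not (usubst_fml \<sigma> U \<phi>)"
| "usubst_fml \<sigma> U (And \<phi> \<psi>) = opt2 And (usubst_fml \<sigma> U \<phi>) (usubst_fml \<sigma> U \<psi>)"
| "usubst_fml \<sigma> U (All z \<phi>) = map_option (All z) (usubst_fml \<sigma> (insert (SV z) U) \<phi>)"
| "usubst_fml \<sigma> U (Box \<alpha> \<psi>) = (case usubst_prog \<sigma> U {} \<alpha> of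
      Some (\<alpha>', V) \<Rightarrow> map_option (Box \<alpha>') (usubst_fml \<sigma> V \<psi>)
    | None \<Rightarrow> None)"
| "usubst_fml \<sigma> U (AC \<alpha> A C \<psi>) = (case usubst_prog \<sigma> U {} \<alpha> of
      Some (\<alpha>', V) \<Rightarrow> (case (usubst_fml \<sigma> V A, usubst_fml \<sigma> V C, usubst_fml \<sigma> V \<psi>) of
          (Some A', Some C', Some \<psi>') \<Rightarrow> Some (AC \<alpha>' A' C' \<psi>')
        | _ \<Rightarrow> None)
    | None \<Rightarrow> None)"
| "usubst_prog \<sigma> U Pc (PConst a Z C) = (let \<beta> = subst_const \<sigma> a Z C in
     (if BV_prog \<beta> \<subseteq> Z \<and> CN_prog \<beta> \<subseteq> C
      then Some (\<beta>, U \<union> syms (BV_prog \<beta>) (CN_prog \<beta>)) else None))"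
| "usubst_prog \<sigma> U Pc (Assign x e) =
     map_option (\<lambda>e'. (Assign x e', insert (SV (RV x)) U)) (usubst_trm \<sigma> (U \<union> SV ` Pc) None e)"
| "usubst_prog \<sigma> U Pc (Rand x) = Some (Rand x, insert (SV (RV x)) U)"
| "usubst_prog \<sigma> U Pc (Test Q) = map_option (\<lambda>Q'. (Test Q', U)) (usubst_fml \<sigma> (U \<union> SV ` Pc) Q)"
| "usubst_prog \<sigma> U Pc (ODE x e Q) =
     opt2 (\<lambda>e' Q'. (ODE x e' Q', U \<union> SV ` {RV x, RV (dif x), RV mu, RV (dif mu)}))
          (usubst_trm \<sigma> (U \<union> SV ` Pc) None e) (usubst_fml \<sigma> (U \<union> SV ` Pc) Q)"
| "usubst_prog \<sigma> U Pc (Seq \<alpha> \<beta>) = (case usubst_prog \<sigma> U Pc \<alpha> of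
      Some (\<alpha>', V1) \<Rightarrow> (case usubst_prog \<sigma> V1 Pc \<beta> of
          Some (\<beta>', V2) \<Rightarrow> Some (Seq \<alpha>' \<beta>', V2)
        | None \<Rightarrow> None)
    | None \<Rightarrow> None)"
| "usubst_prog \<sigma> U Pc (Choice \<alpha> \<beta>) =
     opt2 (\<lambda>(\<alpha>', V1) (\<beta>', V2). (Choice \<alpha>' \<beta>', V1 \<union> V2))
          (usubst_prog \<sigma> U Pc \<alpha>) (usubst_prog \<sigma> U Pc \<beta>)"
| "usubst_prog \<sigma> U Pc (Loop \<alpha>) = (case usubst_prog \<sigma> U Pc \<alpha> of
      Some (_, V) \<Rightarrow> (case usubst_prog \<sigma> V Pc \<alpha> of
          Some (\<alpha>', _) \<Rightarrow> Some (Loop \<alpha>', V)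
        | None \<Rightarrow> None)
    | None \<Rightarrow> None)"
| "usubst_prog \<sigma> U Pc (Send c h e) =
     map_option (\<lambda>e'. (Send c h e', U \<union> {SC c, SV (TV h)})) (usubst_trm \<sigma> (U \<union> SV ` Pc) None e)"
| "usubst_prog \<sigma> U Pc (Recv c h x) = Some (Recv c h x, U \<union> {SC c, SV (TV h), SV (RV x)})"
| "usubst_prog \<sigma> U Pc (Par \<alpha> \<beta>) = (case (usubst_prog \<sigma> U Pc \<alpha>, usubst_prog \<sigma> U Pc \<beta>) of
      (Some (\<alpha>0, _), Some (\<beta>0, _)) \<Rightarrow>
        opt2 (\<lambda>(\<alpha>', V1) (\<beta>', V2). (Par \<alpha>' \<beta>', V1 \<union> V2))
             (usubst_prog \<sigma> U (par_ctx Pc \<beta>0) \<alpha>) (usubst_prog \<sigma> U (par_ctx Pc \<alpha>0) \<beta>)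
    | _ \<Rightarrow> None)"

definition adj_interp :: "usubst \<Rightarrow> state \<Rightarrow> interp \<Rightarrow> interp" where
  "adj_interp \<sigma> w I = I\<lparr>
     IF := (\<lambda>f. case SF \<sigma> f of Some t \<Rightarrow> (\<lambda>ds. trm_sem (I\<lparr>IDot := ds\<rparr>) w t) | None \<Rightarrow> IF I f),
     IP := (\<lambda>p. case SP \<sigma> p of Some \<phi> \<Rightarrow> (\<lambda>ds. fml_sem (I\<lparr>IDot := ds\<rparr>) w \<phi>) | None \<Rightarrow> IP I p),
     IA := (\<lambda>a. case SA \<sigma> a of Some \<beta> \<Rightarrow> prog_sem I \<beta> | None \<Rightarrow> IA I a)\<rparr>"

definition is_variation :: "sym set \<Rightarrow> state \<Rightarrow> state \<Rightarrow> bool" where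
  "is_variation U v w \<longleftrightarrow>
     (let C = {c. SC c \<notin> U} in eqon (sproj C v) (sproj C w) {z. SV z \<notin> U})"

end

theory Submission
  imports Defs
begin

text \<open>A run of the substituted program under the adjoint interpretation is confined to
  the output taboo \<open>V\<close>: real and integer variables outside \<open>V\<close> keep their values, trace
  variables are never changed in the final state, and every recorded event carries a trace
  variable or a channel in \<open>V\<close>. Substituted program constants get this from their bound
  variables and channels, which the substitution adds to the taboo; all other constructs
  preserve it compositionally. Confinement makes the observable final state a
  \<open>V\<close>-variation of the initial one, and the initial state is a \<open>V\<close>-variation of \<open>w\<close>
  because the input taboo is contained in the output taboo.\<close>

lemma prog_induct [case_names PConst Assign Rand Test ODE Seq Choice Loop Send Recv Par]:
  assumes "\<And>a Z C. P (PConst a Z C)" "\<And>x e. P (Assign x e)" "\<And>x. P (Rand x)" "\<And>Q. P (Test Q)"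
    "\<And>x e Q. P (ODE x e Q)" "\<And>\<alpha> \<beta>. P \<alpha> \<Longrightarrow> P \<beta> \<Longrightarrow> P (Seq \<alpha> \<beta>)"
    "\<And>\<alpha> \<beta>. P \<alpha> \<Longrightarrow> P \<beta> \<Longrightarrow> P (Choice \<alpha> \<beta>)" "\<And>\<alpha>. P \<alpha> \<Longrightarrow> P (Loop \<alpha>)"
    "\<And>c h e. P (Send c h e)" "\<And>c h x. P (Recv c h x)"
    "\<And>\<alpha> \<beta>. P \<alpha> \<Longrightarrow> P \<beta> \<Longrightarrow> P (Par \<alpha> \<beta>)"
  shows "P \<alpha>"
  by (rule prog.induct[of "\<lambda>_. True" P]) (simp_all add: assms)

lemma powc_preserves:
  assumes refl: "\<And>v. R v [] v"
    and trans: "\<And>v \<tau>1 m \<tau>2 u. R v \<tau>1 m \<Longrightarrow> R m \<tau>2 u \<Longrightarrow> R v (\<tau>1 @ \<tau>2) u"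
    and step: "\<And>v \<tau> u. (v, \<tau>, Some u) \<in> A \<Longrightarrow> R v \<tau> u"
  shows "(v, \<tau>, Some u) \<in> powc A n \<Longrightarrow> R v \<tau> u"
proof (induction n arbitrary: v \<tau> u)
  case 0
  then show ?case by (auto simp: Lam_def refl)
next
  case (Suc n)
  then obtain \<tau>1 m \<tau>2 where "\<tau> = \<tau>1 @ \<tau>2" "(v, \<tau>1, Some m) \<in> A" "(m, \<tau>2, Some u) \<in> powc A n"
    by (auto simp: seqc_def)
  then show ?case using step trans Suc.IH by blast
qed

lemma ODE_final_state:
  assumes "(v, \<tau>, Some u) \<in> prog_sem J (ODE x e Q)"
  obtains "\<tau> = []" and "\<And>z. z \<notin> {RV x, RV (dif x), RV mu, RV (dif mu)} \<Longrightarrow> sget u z = sget v z"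
  using assms by (auto simp: Lam_def)

lemma prog_sem_preserves_traces:
  assumes const: "\<And>a v \<tau> u. (v, \<tau>, Some u) \<in> IA J a \<Longrightarrow> sT u = sT v"
  shows "(v, \<tau>, Some u) \<in> prog_sem J \<alpha> \<Longrightarrow> sT u = sT v"
proof (induction \<alpha> arbitrary: v \<tau> u rule: prog_induct)
  case (PConst a Z C)
  then show ?case using const by simp
next
  case (Assign x e)
  then show ?case by (auto simp: Lam_def rupd_def)
next
  case (Rand x)
  then show ?case by (auto simp: Lam_def rupd_def)
next
  case (Test Q)
  then show ?case by (auto simp: Lam_def)
next
  case (ODE x e Q)
  then obtain "\<And>h. sget u (TV h) = sget v (TV h)" by (rule ODE_final_state) blast
  then show ?case by auto
next
  case (Seq \<alpha>1 \<alpha>2)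
  then show ?case by (auto simp: seqc_def)
next
  case (Choice \<alpha>1 \<alpha>2)
  then show ?case by auto
next
  case (Loop \<alpha>)
  then obtain n where "(v, \<tau>, Some u) \<in> powc (prog_sem J \<alpha>) n" by auto
  then show ?case using powc_preserves[where R = "\<lambda>v _ u. sT u = sT v", OF _ _ Loop.IH] by simp
next
  case (Send c h e)
  then show ?case by (auto simp: cpref_def)
next
  case (Recv c h x)
  then show ?case by (auto simp: cpref_def rupd_def)
next
  case (Par \<alpha>1 \<alpha>2)
  then obtain B \<tau>1 \<tau>2 w1 w2 where u: "Some u = merge B w1 w2"
    and "(v, \<tau>1, w1) \<in> prog_sem J \<alpha>1" "(v, \<tau>2, w2) \<in> prog_sem J \<alpha>2"
    by (auto simp: Let_def)
  moreover obtain u1 u2 where "w1 = Some u1" "w2 = Some u2"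
    using u by (auto simp: merge_def split: option.splits)
  ultimately show ?case using Par.IH by (auto simp: merge_def)
qed

lemma is_interp_preserves_traces:
  assumes "is_interp I" "(v, \<tau>, Some u) \<in> prog_sem I \<alpha>"
  shows "sT u = sT v"
proof (rule prog_sem_preserves_traces[OF _ assms(2)])
  fix a v \<tau> u assume "(v, \<tau>, Some u) \<in> IA I a"
  with \<open>is_interp I\<close> have "eqon v u (range TV)"
    unfolding is_interp_def Let_def by (cases a) blast
  then show "sT u = sT v" by (auto simp: eqon_def)
qed

lemma usubst_prog_taboo_mono:
  "usubst_prog \<sigma> U Pc \<alpha> = Some (\<alpha>', V) \<Longrightarrow> U \<subseteq> V"
proof (induction \<alpha> arbitrary: U Pc \<alpha>' V rule: prog_induct)
  case (Seq \<alpha>1 \<alpha>2)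
  then show ?case by (auto split: option.splits) blast
next
  case (Choice \<alpha>1 \<alpha>2)
  then show ?case by (auto simp: opt2_def split: option.splits prod.splits) blast
next
  case (Par \<alpha>1 \<alpha>2)
  then show ?case by (auto simp: opt2_def split: option.splits prod.splits) blast
qed (auto simp: Let_def opt2_def split: if_splits option.splits prod.splits)

definition confined :: "sym set \<Rightarrow> state \<Rightarrow> rtrace \<Rightarrow> state \<Rightarrow> bool" where
  "confined V v \<tau> u \<longleftrightarrow>
     (\<forall>x. SV (RV x) \<notin> V \<longrightarrow> sR u x = sR v x) \<and>
     (\<forall>n. SV (NV n) \<notin> V \<longrightarrow> sN u n = sN v n) \<and>
     sT u = sT v \<and>
     (\<forall>(h, c, _) \<in> set \<tau>. SV (TV h) \<in> V \<or> SC c \<in> V)"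

lemma confined_refl: "confined V v [] v"
  by (simp add: confined_def)

lemma confined_trans: "confined V v \<tau>1 m \<Longrightarrow> confined V m \<tau>2 u \<Longrightarrow> confined V v (\<tau>1 @ \<tau>2) u"
  by (auto simp: confined_def)

lemma confined_mono: "confined V v \<tau> u \<Longrightarrow> V \<subseteq> V' \<Longrightarrow> confined V' v \<tau> u"
  by (fastforce simp: confined_def)

lemma sapp_sR [simp]: "sR (sapp u \<tau>) = sR u"
  and sapp_sN [simp]: "sN (sapp u \<tau>) = sN u"
  by (simp_all add: sapp_def)

lemma sapp_sT: "sT (sapp u \<tau>) h = sT u h @ map (\<lambda>(_, c, d, s). (c, d, s)) (filter (\<lambda>(h', _, _, _). h' = h) \<tau>)"
  by (simp add: sapp_def)

lemma confined_bound_vars: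
  assumes sT: "sT u = sT v"
    and free: "\<And>z. z \<notin> B \<Longrightarrow> sget (sapp u \<tau>) z = sget v z"
  shows "confined (U \<union> syms B C) v \<tau> u"
  unfolding confined_def
proof (intro conjI allI impI ballI)
  fix x assume "SV (RV x) \<notin> U \<union> syms B C"
  then show "sR u x = sR v x" using free[of "RV x"] by (auto simp: syms_def)
next
  fix n assume "SV (NV n) \<notin> U \<union> syms B C"
  then show "sN u n = sN v n" using free[of "NV n"] by (auto simp: syms_def)
next
  fix e assume e: "e \<in> set \<tau>"
  obtain h c r where e_def: "e = (h, c, r)" by (cases e)
  have "TV h \<in> B"
  proof (rule ccontr)
    assume "TV h \<notin> B"
    then have "sT (sapp u \<tau>) h = sT v h" using free[of "TV h"] by simp
    then have "filter (\<lambda>(h', _, _, _). h' = h) \<tau> = []" by (simp add: sapp_sT sT)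
    with e e_def show False by (auto simp: filter_empty_conv)
  qed
  then show "case e of (h, c, _) \<Rightarrow> SV (TV h) \<in> U \<union> syms B C \<or> SC c \<in> U \<union> syms B C"
    by (simp add: e_def syms_def)
qed (rule sT)

lemma confined_merge:
  assumes u: "merge B (Some u1) (Some u2) = Some u"
    and c1: "confined V v \<tau>1 u1" and c2: "confined V v \<tau>2 u2"
    and events: "set \<tau> \<subseteq> set \<tau>1 \<union> set \<tau>2"
  shows "confined V v \<tau> u"
proof -
  have u_def: "u = \<lparr>sR = (\<lambda>x. if RV x \<in> B then sR u1 x else sR u2 x),
      sN = (\<lambda>n. if NV n \<in> B then sN u1 n else sN u2 n),
      sT = (\<lambda>h. if TV h \<in> B then sT u1 h else sT u2 h)\<rparr>"
    using u by (simp add: merge_def)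
  show ?thesis unfolding confined_def
  proof (intro conjI allI impI)
    fix x assume "SV (RV x) \<notin> V"
    with c1 c2 have "sR u1 x = sR v x" "sR u2 x = sR v x" unfolding confined_def by blast+
    then show "sR u x = sR v x" by (simp add: u_def)
  next
    fix n assume "SV (NV n) \<notin> V"
    with c1 c2 show "sN u n = sN v n" by (simp add: u_def confined_def)
  next
    have "sT u1 = sT v" "sT u2 = sT v" using c1 c2 unfolding confined_def by blast+
    then show "sT u = sT v" by (simp add: u_def fun_eq_iff)
  next
    show "\<forall>(h, c, _) \<in> set \<tau>. SV (TV h) \<in> V \<or> SC c \<in> V"
      using c1 c2 events unfolding confined_def by blast
  qed
qed

lemma usubst_prog_run_confined:
  assumes I: "is_interp I"
  shows "usubst_prog \<sigma> U Pc \<alpha> = Some (\<alpha>', V) \<Longrightarrow>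
    (v, \<tau>, Some u) \<in> prog_sem (adj_interp \<sigma> w I) \<alpha> \<Longrightarrow> confined V v \<tau> u"
proof (induction \<alpha> arbitrary: U Pc \<alpha>' V v \<tau> u rule: prog_induct)
  case (PConst a Z C)
  define \<beta> where "\<beta> = subst_const \<sigma> a Z C"
  have V: "V = U \<union> syms (BV_prog \<beta>) (CN_prog \<beta>)"
    using PConst.prems(1) by (auto simp: \<beta>_def Let_def split: if_splits)
  have run: "(v, \<tau>, Some u) \<in> prog_sem I \<beta>"
    using PConst.prems(2) by (auto simp: \<beta>_def subst_const_def adj_interp_def split: option.splits)
  show ?case unfolding V
  proof (rule confined_bound_vars)
    show "sT u = sT v" using is_interp_preserves_traces[OF I run] .
    show "sget (sapp u \<tau>) z = sget v z" if "z \<notin> BV_prog \<beta>" for z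
      using that run I unfolding BV_prog_def bvs_def by blast
  qed
next
  case (ODE x e Q)
  then have V: "V = U \<union> SV ` {RV x, RV (dif x), RV mu, RV (dif mu)}"
    by (auto simp: opt2_def split: option.splits)
  from ODE.prems(2) obtain "\<tau> = []"
    and same: "\<And>z. z \<notin> {RV x, RV (dif x), RV mu, RV (dif mu)} \<Longrightarrow> sget u z = sget v z"
    by (rule ODE_final_state) blast
  then show ?case unfolding confined_def
  proof (intro conjI allI impI)
    fix y assume "SV (RV y) \<notin> V"
    then show "sR u y = sR v y" using same[of "RV y"] by (auto simp: V)
  next
    fix n show "sN u n = sN v n" using same[of "NV n"] by simp
  next
    show "sT u = sT v"
    proof
      fix h show "sT u h = sT v h" using same[of "TV h"] by simp
    qed
  qed simp
next
  case (Seq \<alpha>1 \<alpha>2)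
  from Seq.prems(1) obtain \<alpha>1' V1 \<alpha>2' where
    s1: "usubst_prog \<sigma> U Pc \<alpha>1 = Some (\<alpha>1', V1)" and s2: "usubst_prog \<sigma> V1 Pc \<alpha>2 = Some (\<alpha>2', V)"
    by (auto split: option.splits)
  from Seq.prems(2) obtain \<tau>1 m \<tau>2 where "\<tau> = \<tau>1 @ \<tau>2"
    "(v, \<tau>1, Some m) \<in> prog_sem (adj_interp \<sigma> w I) \<alpha>1" "(m, \<tau>2, Some u) \<in> prog_sem (adj_interp \<sigma> w I) \<alpha>2"
    by (auto simp: seqc_def)
  with Seq.IH(1)[OF s1] Seq.IH(2)[OF s2] usubst_prog_taboo_mono[OF s2] show ?case
    by (metis confined_mono confined_trans)
next
  case (Choice \<alpha>1 \<alpha>2)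
  from Choice.prems(1) obtain \<alpha>1' V1 \<alpha>2' V2 where
    s1: "usubst_prog \<sigma> U Pc \<alpha>1 = Some (\<alpha>1', V1)" and s2: "usubst_prog \<sigma> U Pc \<alpha>2 = Some (\<alpha>2', V2)"
    and V: "V = V1 \<union> V2"
    by (auto simp: opt2_def split: option.splits)
  have "confined V1 v \<tau> u \<or> confined V2 v \<tau> u"
    using Choice.prems(2) Choice.IH(1)[OF s1] Choice.IH(2)[OF s2] by auto
  then show ?case using V confined_mono by (metis Un_upper1 Un_upper2)
next
  case (Loop \<alpha>)
  from Loop.prems(1) obtain \<alpha>0 where s: "usubst_prog \<sigma> U Pc \<alpha> = Some (\<alpha>0, V)"
    by (auto split: option.splits)
  from Loop.prems(2) obtain n where "(v, \<tau>, Some u) \<in> powc (prog_sem (adj_interp \<sigma> w I) \<alpha>) n"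
    by auto
  then show ?case
    by (rule powc_preserves[where R = "confined V", rotated 3])
      (blast intro: confined_refl confined_trans Loop.IH[OF s])+
next
  case (Par \<alpha>1 \<alpha>2)
  from Par.prems(1) obtain P1 P2 \<alpha>1' V1 \<alpha>2' V2 where
    s1: "usubst_prog \<sigma> U P1 \<alpha>1 = Some (\<alpha>1', V1)" and s2: "usubst_prog \<sigma> U P2 \<alpha>2 = Some (\<alpha>2', V2)"
    and V: "V = V1 \<union> V2"
    by (auto simp: opt2_def split: option.splits)
  let ?J = "adj_interp \<sigma> w I"
  define B1 where "B1 = bvs (\<lambda>J. prog_sem J \<alpha>1)"
  define C1 where "C1 = cns (\<lambda>J. prog_sem J \<alpha>1)"
  define B2 where "B2 = bvs (\<lambda>J. prog_sem J \<alpha>2)"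
  define C2 where "C2 = cns (\<lambda>J. prog_sem J \<alpha>2)"
  from Par.prems(2) obtain u1 u2 where
    u: "merge B1 (Some u1) (Some u2) = Some u" and
    run1: "(v, commproj B1 C1 \<tau>, Some u1) \<in> prog_sem ?J \<alpha>1" and
    run2: "(v, commproj B2 C2 \<tau>, Some u2) \<in> prog_sem ?J \<alpha>2" and
    events: "\<forall>e\<in>set \<tau>. e \<in> set (commproj B1 C1 [e]) \<or> e \<in> set (commproj B2 C2 [e])"
    unfolding B1_def C1_def B2_def C2_def by (auto simp: Let_def merge_def split: option.splits)
  have "confined V v (commproj B1 C1 \<tau>) u1" "confined V v (commproj B2 C2 \<tau>) u2"
    using Par.IH(1)[OF s1 run1] Par.IH(2)[OF s2 run2] by (auto simp: V intro: confined_mono)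
  moreover have "set \<tau> \<subseteq> set (commproj B1 C1 \<tau>) \<union> set (commproj B2 C2 \<tau>)"
    using events by (auto simp: commproj_def split: if_splits)
  ultimately show ?case by (rule confined_merge[OF u])
next
  case (Assign x e)
  then show ?case by (auto simp: confined_def Lam_def rupd_def)
next
  case (Rand x)
  then show ?case by (auto simp: confined_def Lam_def rupd_def split: if_splits)
next
  case (Test Q)
  then show ?case by (auto simp: confined_def Lam_def)
next
  case (Send c h e)
  then show ?case by (auto simp: confined_def cpref_def)
next
  case (Recv c h x)
  then show ?case by (auto simp: confined_def cpref_def rupd_def split: if_splits)
qed

lemma tproj_tproj: "D \<subseteq> C \<Longrightarrow> tproj D (tproj C t) = tproj D t"
  unfolding tproj_def by (induction t) auto

lemma is_variationI:
  assumes "\<And>x. SV (RV x) \<notin> V \<Longrightarrow> sR v x = sR w x"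
    and "\<And>n. SV (NV n) \<notin> V \<Longrightarrow> sN v n = sN w n"
    and "\<And>h. SV (TV h) \<notin> V \<Longrightarrow> tproj {c. SC c \<notin> V} (sT v h) = tproj {c. SC c \<notin> V} (sT w h)"
  shows "is_variation V v w"
  unfolding is_variation_def Let_def eqon_def
proof
  fix z assume "z \<in> {z. SV z \<notin> V}"
  with assms show "sget (sproj {c. SC c \<notin> V} v) z = sget (sproj {c. SC c \<notin> V} w) z"
    by (cases z) (simp_all add: sproj_def)
qed

lemma is_variationD:
  assumes "is_variation V v w"
  shows is_variation_sR: "SV (RV x) \<notin> V \<Longrightarrow> sR v x = sR w x"
    and is_variation_sN: "SV (NV n) \<notin> V \<Longrightarrow> sN v n = sN w n"
    and is_variation_sT: "SV (TV h) \<notin> V \<Longrightarrow> tproj {c. SC c \<notin> V} (sT v h) = tproj {c. SC c \<notin> V} (sT w h)"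
proof -
  have "sget (sproj {c. SC c \<notin> V} v) z = sget (sproj {c. SC c \<notin> V} w) z" if "SV z \<notin> V" for z
    using assms that unfolding is_variation_def Let_def eqon_def by blast
  from this[of "RV x"] this[of "NV n"] this[of "TV h"]
  show "SV (RV x) \<notin> V \<Longrightarrow> sR v x = sR w x"
    and "SV (NV n) \<notin> V \<Longrightarrow> sN v n = sN w n"
    and "SV (TV h) \<notin> V \<Longrightarrow> tproj {c. SC c \<notin> V} (sT v h) = tproj {c. SC c \<notin> V} (sT w h)"
    by (simp_all add: sproj_def)
qed

lemma is_variation_trans: "is_variation V u v \<Longrightarrow> is_variation V v w \<Longrightarrow> is_variation V u w"
  by (simp add: is_variation_def Let_def eqon_def)

lemma is_variation_mono:
  assumes var: "is_variation U v w" and UV: "U \<subseteq> V"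
  shows "is_variation V v w"
proof (rule is_variationI)
  fix x assume "SV (RV x) \<notin> V"
  with UV have "SV (RV x) \<notin> U" by blast
  then show "sR v x = sR w x" by (rule is_variation_sR[OF var])
next
  fix n assume "SV (NV n) \<notin> V"
  with UV have "SV (NV n) \<notin> U" by blast
  then show "sN v n = sN w n" by (rule is_variation_sN[OF var])
next
  fix h assume "SV (TV h) \<notin> V"
  with UV have "SV (TV h) \<notin> U" by blast
  then have "tproj {c. SC c \<notin> U} (sT v h) = tproj {c. SC c \<notin> U} (sT w h)"
    by (rule is_variation_sT[OF var])
  then have "tproj {c. SC c \<notin> V} (tproj {c. SC c \<notin> U} (sT v h)) =
      tproj {c. SC c \<notin> V} (tproj {c. SC c \<notin> U} (sT w h))" by (rule arg_cong)
  moreover have "{c. SC c \<notin> V} \<subseteq> {c. SC c \<notin> U}" using UV by auto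
  ultimately show "tproj {c. SC c \<notin> V} (sT v h) = tproj {c. SC c \<notin> V} (sT w h)"
    by (simp only: tproj_tproj)
qed

lemma confined_is_variation:
  assumes "confined V v \<tau> u"
  shows "is_variation V (sapp u \<tau>) v"
proof (rule is_variationI)
  fix h assume "SV (TV h) \<notin> V"
  with assms have "\<forall>(h', c, _) \<in> set \<tau>. h' = h \<longrightarrow> SC c \<in> V"
    unfolding confined_def by fastforce
  then have "tproj {c. SC c \<notin> V} (map (\<lambda>(_, c, d, s). (c, d, s)) (filter (\<lambda>(h', _, _, _). h' = h) \<tau>)) = []"
    unfolding tproj_def by (fastforce simp: filter_empty_conv)
  with assms show "tproj {c. SC c \<notin> V} (sT (sapp u \<tau>) h) = tproj {c. SC c \<notin> V} (sT v h)"
    by (simp add: sapp_sT confined_def tproj_def)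
qed (use assms in \<open>simp_all add: confined_def del: split_paired_All\<close>)

theorem mainTheorem8:
  fixes \<sigma> :: usubst and \<alpha> \<alpha>' :: prog and U V :: "sym set" and I :: interp
    and w v u :: state and \<tau> :: rtrace
  assumes "wf_usubst \<sigma>"
    and "wf_prog \<alpha>"
    and "is_interp I"
    and "usubst_prog \<sigma> U {} \<alpha> = Some (\<alpha>', V)"
    and "is_variation U v w"
    and "(v, \<tau>, Some u) \<in> prog_sem (adj_interp \<sigma> w I) \<alpha>"
  shows "is_variation V (sapp u \<tau>) w"
proof (rule is_variation_trans)
  show "is_variation V (sapp u \<tau>) v"
    using usubst_prog_run_confined[OF assms(3,4,6)] by (rule confined_is_variation)
  show "is_variation V v w"
    using assms(5) usubst_prog_taboo_mono[OF assms(4)] by (rule is_variation_mono)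
qed

end
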